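(* Let $N=r+1$ and let $M_n:=M_{1,n}$ and $M_{\alpha,n}$ ($\alpha\in[1,N]$, $n\in\mathbb Z$) be the difference operators $$M_{\alpha,n}=\sum_{I\subset[1,N],\,|I|=\alpha}x_I^{\,n}\prod_{i\in I,\ j\notin I}\frac{x_i}{x_i-x_j}\,\Gamma_I,$$ with $x_I=\prod_{i\in I}x_i$, $\Gamma_I=\prod_{i\in I}\Gamma_i$, $(\Gamma_if)(x)=f(\dots,qx_i,\dots)$. Let $m(u)=\sum_{n\in\mathbb{Z}}u^nM_n$. Then for every $\alpha\in[1,N]$ and $n\in\mathbb{Z}$, $M_{\alpha,n}$ equals the coefficient of $(u_1u_2\cdots u_\alpha)^n$ in the formal series $$\prod_{1\le i<j\le\alpha}\Big(1-q\frac{u_j}{u_i}\Big)\,m(u_1)m(u_2)\cdots m(u_\alpha),$$ i.e. $\sum_{\alpha\text{-}\mathrm{currents}}\,$: $M_{\alpha,n}=\sum_{S}c_S\,M_{n+s_1}\cdots M_{n+s_\alpha}$ where $\prod_{i<j}(1-qu_j/u_i)=\sum_S c_S\prod_i u_i^{-s_i}$. Equivalently, with $m_\alpha(z)=\sum_nz^nM_{\alpha,n}$, $m_\alpha$ is obtained from this series by extracting the coefficients of $(u_1\cdots u_\alpha)^n$.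
   Context: The operators act on symmetric functions in $x_1,\dots,x_N$. The product $\prod_{i<j}(1-qu_j/u_i)$ is a Laurent polynomial, so each coefficient extraction is a finite sum of ordered products of the operators $M_n$. *)

theory Defs
  imports "HOL-Combinatorics.Permutations"
begin

text \<open>Points are x :: nat => 'a; only coordinates 0..N-1 (i.e. x_1..x_N) are used.
Functions are f :: (nat => 'a) => 'a.\<close>

definition x_I :: "nat set \<Rightarrow> (nat \<Rightarrow> 'a::field) \<Rightarrow> 'a" where
  "x_I I x = (\<Prod>i\<in>I. x i)"

definition Gamma :: "'a::field \<Rightarrow> nat set \<Rightarrow> ((nat \<Rightarrow> 'a) \<Rightarrow> 'a) \<Rightarrow> (nat \<Rightarrow> 'a) \<Rightarrow> 'a" where
  "Gamma q I f x = f (\<lambda>k. if k \<in> I then q * x k else x k)"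

definition Mop :: "'a::field \<Rightarrow> nat \<Rightarrow> nat \<Rightarrow> int \<Rightarrow> ((nat \<Rightarrow> 'a) \<Rightarrow> 'a) \<Rightarrow> (nat \<Rightarrow> 'a) \<Rightarrow> 'a" where
  "Mop q N \<alpha> n f x =
     (\<Sum>I\<in>{I. I \<subseteq> {..<N} \<and> card I = \<alpha>}.
        (x_I I x) powi n
        * (\<Prod>i\<in>I. \<Prod>j\<in>{..<N} - I. x i / (x i - x j))
        * Gamma q I f x)"

abbreviation M1 :: "'a::field \<Rightarrow> nat \<Rightarrow> int \<Rightarrow> ((nat \<Rightarrow> 'a) \<Rightarrow> 'a) \<Rightarrow> (nat \<Rightarrow> 'a) \<Rightarrow> 'a" where
  "M1 q N n \<equiv> Mop q N 1 n"

text \<open>Expansion of prod_{0<=i<j<alpha} (1 - q u_j/u_i): choosing a set P of pairs (i,j)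
from which the term -q u_j u_i^{-1} is taken gives the monomial prod_k u_k^{-s_k} with
s_k = #{(k,j) in P} - #{(i,k) in P}, and coefficient (-q)^|P|.\<close>
definition pairs :: "nat \<Rightarrow> (nat \<times> nat) set" where
  "pairs \<alpha> = {(i,j). i < j \<and> j < \<alpha>}"

definition sexp :: "(nat \<times> nat) set \<Rightarrow> nat \<Rightarrow> int" where
  "sexp P k = int (card {j. (k,j) \<in> P}) - int (card {i. (i,k) \<in> P})"

definition coeffS :: "'a::field \<Rightarrow> nat \<Rightarrow> (nat \<Rightarrow> int) \<Rightarrow> 'a" where
  "coeffS q \<alpha> S = (\<Sum>P\<in>{P. P \<subseteq> pairs \<alpha> \<and> sexp P = S}. (- q) ^ card P)"

definition suppS :: "nat \<Rightarrow> (nat \<Rightarrow> int) set" where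
  "suppS \<alpha> = sexp ` Pow (pairs \<alpha>)"

definition Mprod :: "'a::field \<Rightarrow> nat \<Rightarrow> nat \<Rightarrow> int \<Rightarrow> (nat \<Rightarrow> int)
     \<Rightarrow> ((nat \<Rightarrow> 'a) \<Rightarrow> 'a) \<Rightarrow> (nat \<Rightarrow> 'a) \<Rightarrow> 'a" where
  "Mprod q N \<alpha> n S f = foldr (\<lambda>k g. M1 q N (n + S k) g) [0..<\<alpha>] f"

definition symmetric_fun :: "nat \<Rightarrow> ((nat \<Rightarrow> 'a) \<Rightarrow> 'b) \<Rightarrow> bool" where
  "symmetric_fun N f \<longleftrightarrow> (\<forall>\<sigma> x. \<sigma> permutes {..<N} \<longrightarrow> f (x \<circ> \<sigma>) = f x)"

text \<open>Generic points: all denominators occurring in products of at most N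
operators are nonzero, and negative powers are defined.\<close>
definition generic_pt :: "'a::field \<Rightarrow> nat \<Rightarrow> (nat \<Rightarrow> 'a) \<Rightarrow> bool" where
  "generic_pt q N x \<longleftrightarrow> q \<noteq> 0 \<and> (\<forall>i<N. x i \<noteq> 0) \<and>
     (\<forall>i<N. \<forall>j<N. \<forall>a\<le>N. \<forall>b\<le>N. i \<noteq> j \<longrightarrow> q ^ a * x i \<noteq> q ^ b * x j)"

end

theory Submission
  imports Defs "HOL-Combinatorics.Multiset_Permutations"
begin

text \<open>Expanding the ordered product M_{n+s_1} ... M_{n+s_alpha} f(x) gives a sum over index sequences
(i_1, ..., i_alpha): step k contributes v_k^(n+s_k), where v_k is the value of x_(i_k) after the shifts
Gamma_(i_1), ..., Gamma_(i_(k-1)) of the earlier steps. Summing against the coefficients c_S reassembles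
these powers into prod_k v_k^n * prod_(k<l) (1 - q v_k / v_l). At the first repeated index v_l = q v_k,
so only repetition-free sequences survive. Such a sequence enumerates an alpha-subset I, and its term is
the I-summand of M_(alpha,n) times the weight prod_(k<l) x_(i_k) / (x_(i_k) - x_(i_l)). Over all orderings
of I these weights sum to 1, by induction on |I| from the Lagrange identity
sum_(a in I) prod_(j in I - {a}) x_a / (x_a - x_j) = 1.\<close>

definition qshift :: "'a::field \<Rightarrow> (nat \<Rightarrow> 'a) \<Rightarrow> nat list \<Rightarrow> nat \<Rightarrow> 'a" where
  "qshift q y is j = q ^ count_list is j * y j"

definition step_coeff :: "nat \<Rightarrow> (nat \<Rightarrow> 'a::field) \<Rightarrow> nat \<Rightarrow> 'a" where
  "step_coeff N y i = (\<Prod>j\<in>{..<N}-{i}. y i / (y i - y j))"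

fun seq_coeff :: "'a::field \<Rightarrow> nat \<Rightarrow> (nat \<Rightarrow> 'a) \<Rightarrow> nat list \<Rightarrow> 'a" where
  "seq_coeff q N y [] = 1"
| "seq_coeff q N y (i # is) = step_coeff N y i * seq_coeff q N (qshift q y [i]) is"

definition seq_val :: "'a::field \<Rightarrow> (nat \<Rightarrow> 'a) \<Rightarrow> nat list \<Rightarrow> nat \<Rightarrow> 'a" where
  "seq_val q y is k = qshift q y (take k is) (is ! k)"

definition index_seqs :: "nat \<Rightarrow> nat \<Rightarrow> nat list set" where
  "index_seqs N m = {is. set is \<subseteq> {..<N} \<and> length is = m}"

definition M1_comp ::
    "'a::field \<Rightarrow> nat \<Rightarrow> int list \<Rightarrow> ((nat \<Rightarrow> 'a) \<Rightarrow> 'a) \<Rightarrow> (nat \<Rightarrow> 'a) \<Rightarrow> 'a" where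
  "M1_comp q N es g = foldr (\<lambda>e h. M1 q N e h) es g"

lemma qshift_Nil [simp]: "qshift q y [] = y"
  by (rule ext) (simp add: qshift_def)

lemma qshift_append: "qshift q y (as @ bs) = qshift q (qshift q y as) bs"
  by (auto simp: qshift_def power_add fun_eq_iff)

lemma Gamma_singleton: "Gamma q {i} g y = g (qshift q y [i])"
  unfolding Gamma_def qshift_def by (rule arg_cong[where f = g]) auto

lemma M1_eq_sum: "M1 q N e g y = (\<Sum>i<N. y i powi e * step_coeff N y i * g (qshift q y [i]))"
proof -
  have singletons: "{I. I \<subseteq> {..<N} \<and> card I = 1} = (\<lambda>i. {i}) ` {..<N}"
    by (auto simp: card_1_singleton_iff)
  show ?thesis
    unfolding Mop_def singletons
    by (subst sum.reindex) (auto simp: x_I_def step_coeff_def Gamma_singleton)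
qed

lemma index_seqs_Suc: "index_seqs N (Suc m) = (\<lambda>(is, i). i # is) ` (index_seqs N m \<times> {..<N})"
  unfolding index_seqs_def by (rule lists_length_Suc_eq)

lemma finite_index_seqs: "finite (index_seqs N m)"
  unfolding index_seqs_def by (rule finite_lists_length_eq) simp

lemma seq_val_Cons_0: "seq_val q y (i # is) 0 = y i"
  by (simp add: seq_val_def)

lemma seq_val_Cons_Suc: "seq_val q y (i # is) (Suc k) = seq_val q (qshift q y [i]) is k"
  by (simp add: seq_val_def qshift_append[symmetric])

lemma M1_comp_expand:
  "M1_comp q N es g y = (\<Sum>is\<in>index_seqs N (length es).
      (\<Prod>k<length es. seq_val q y is k powi (es ! k)) * seq_coeff q N y is * g (qshift q y is))"
proof (induction es arbitrary: y)
  case Nil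
  have "index_seqs N 0 = {[]}" by (auto simp: index_seqs_def)
  then show ?case by (simp add: M1_comp_def)
next
  case (Cons e es)
  let ?F = "\<lambda>is. (\<Prod>k<length (e # es). seq_val q y is k powi ((e # es) ! k))
                  * seq_coeff q N y is * g (qshift q y is)"
  have step: "y i powi e * step_coeff N y i * M1_comp q N es g (qshift q y [i])
      = (\<Sum>is\<in>index_seqs N (length es). ?F (i # is))" for i
    unfolding Cons.IH sum_distrib_left
    by (rule sum.cong[OF refl])
       (simp only: length_Cons prod.lessThan_Suc_shift seq_val_Cons_0 seq_val_Cons_Suc
         nth_Cons_0 nth_Cons_Suc seq_coeff.simps qshift_append[symmetric] append_Cons append_Nil
         ac_simps)
  have "M1_comp q N (e # es) g y = M1 q N e (M1_comp q N es g) y"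
    by (simp add: M1_comp_def)
  also have "\<dots> = (\<Sum>i<N. \<Sum>is\<in>index_seqs N (length es). ?F (i # is))"
    by (simp only: M1_eq_sum step)
  also have "\<dots> = (\<Sum>(is, i)\<in>index_seqs N (length es) \<times> {..<N}. ?F (i # is))"
    by (subst sum.swap) (simp add: sum.cartesian_product split_def)
  also have "\<dots> = sum ?F (index_seqs N (length (e # es)))"
    unfolding index_seqs_Suc length_Cons
    by (subst sum.reindex) (auto simp: inj_on_def split_def)
  finally show ?case .
qed

lemma Mprod_expand:
  "Mprod q N \<alpha> n S f x = (\<Sum>is\<in>index_seqs N \<alpha>.
      (\<Prod>k<\<alpha>. seq_val q x is k powi (n + S k)) * seq_coeff q N x is * f (qshift q x is))"
proof -
  have "Mprod q N \<alpha> n S f = M1_comp q N (map (\<lambda>k. n + S k) [0..<\<alpha>]) f"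
    unfolding Mprod_def M1_comp_def by (simp add: foldr_map comp_def)
  then show ?thesis by (simp add: M1_comp_expand)
qed

lemma finite_pairs: "finite (pairs \<alpha>)"
  by (rule finite_subset[of _ "{..<\<alpha>} \<times> {..<\<alpha>}"]) (auto simp: pairs_def)

lemma sexp_empty [simp]: "sexp {} k = 0"
  by (simp add: sexp_def)

lemma card_insert_fiber:
  assumes "finite P" "(a, b) \<notin> P"
  shows "card {j. (k, j) \<in> insert (a, b) P} = card {j. (k, j) \<in> P} + (if k = a then 1 else 0)"
    and "card {i. (i, k) \<in> insert (a, b) P} = card {i. (i, k) \<in> P} + (if k = b then 1 else 0)"
proof -
  have "finite {j. (k, j) \<in> P}"
    by (rule finite_subset[OF _ finite_imageI[OF assms(1), of snd]]) force
  moreover have "finite {i. (i, k) \<in> P}"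
    by (rule finite_subset[OF _ finite_imageI[OF assms(1), of fst]]) force
  moreover have "{j. (k, j) \<in> insert (a, b) P} = (if k = a then insert b else id) {j. (k, j) \<in> P}"
    and "{i. (i, k) \<in> insert (a, b) P} = (if k = b then insert a else id) {i. (i, k) \<in> P}"
    by auto
  ultimately show "card {j. (k, j) \<in> insert (a, b) P} = card {j. (k, j) \<in> P} + (if k = a then 1 else 0)"
    and "card {i. (i, k) \<in> insert (a, b) P} = card {i. (i, k) \<in> P} + (if k = b then 1 else 0)"
    using assms(2) by auto
qed

lemma sexp_insert:
  assumes "finite P" "(a, b) \<notin> P"
  shows "sexp (insert (a, b) P) k = sexp P k + ((if k = a then 1 else 0) - (if k = b then 1 else 0))"
  unfolding sexp_def card_insert_fiber[OF assms] by simp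

lemma prod_powi_sexp:
  fixes v :: "nat \<Rightarrow> 'a::field"
  assumes "P \<subseteq> pairs \<alpha>" and nonzero: "\<And>k. k < \<alpha> \<Longrightarrow> v k \<noteq> 0"
  shows "(\<Prod>k<\<alpha>. v k powi sexp P k) = (\<Prod>(i, j)\<in>P. v i / v j)"
  using finite_subset[OF assms(1) finite_pairs] assms(1)
proof (induction P rule: finite_subset_induct)
  case empty
  then show ?case by simp
next
  case (insert p P)
  obtain a b where p: "p = (a, b)" and ab: "a < b" "b < \<alpha>"
    using insert(2) by (auto simp: pairs_def)
  have "v k powi sexp (insert p P) k
      = v k powi sexp P k * ((if k = a then v k else 1) * (if k = b then inverse (v k) else 1))"
    if "k < \<alpha>" for k
  proof -
    have "sexp (insert p P) k = sexp P k + ((if k = a then 1 else 0) - (if k = b then 1 else 0))"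
      using sexp_insert[OF insert(1)] insert(3) by (simp add: p)
    then show ?thesis
      using nonzero[OF that] ab by (auto simp: power_int_add power_int_diff divide_inverse)
  qed
  then have "(\<Prod>k<\<alpha>. v k powi sexp (insert p P) k) = (\<Prod>k<\<alpha>. v k powi sexp P k) * (v a * inverse (v b))"
    using ab by (simp add: prod.distrib prod.delta)
  then show ?case
    using insert p by (simp add: divide_inverse mult.commute)
qed

lemma pairs_product_expansion:
  fixes v :: "nat \<Rightarrow> 'a::field"
  assumes "\<And>k. k < \<alpha> \<Longrightarrow> v k \<noteq> 0"
  shows "(\<Sum>P\<in>Pow (pairs \<alpha>). (- q) ^ card P * (\<Prod>k<\<alpha>. v k powi (n + sexp P k)))
      = (\<Prod>k<\<alpha>. v k powi n) * (\<Prod>(i, j)\<in>pairs \<alpha>. 1 - q * v i / v j)"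
proof -
  have "(\<Prod>(i, j)\<in>pairs \<alpha>. 1 - q * v i / v j) = (\<Prod>(i, j)\<in>pairs \<alpha>. - q * (v i / v j) + 1)"
    by (simp add: split_def)
  also have "\<dots> = (\<Sum>P\<in>Pow (pairs \<alpha>). \<Prod>(i, j)\<in>P. - q * (v i / v j))"
    unfolding split_def by (subst prod_add[OF finite_pairs]) simp
  also have "\<dots> = (\<Sum>P\<in>Pow (pairs \<alpha>). (- q) ^ card P * (\<Prod>k<\<alpha>. v k powi sexp P k))"
  proof (rule sum.cong[OF refl])
    fix P assume "P \<in> Pow (pairs \<alpha>)"
    then have "(\<Prod>k<\<alpha>. v k powi sexp P k) = (\<Prod>(i, j)\<in>P. v i / v j)"
      using prod_powi_sexp assms by blast
    then show "(\<Prod>(i, j)\<in>P. - q * (v i / v j)) = (- q) ^ card P * (\<Prod>k<\<alpha>. v k powi sexp P k)"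
      unfolding split_def prod.distrib prod_constant by simp
  qed
  finally show ?thesis
    using assms by (simp add: sum_distrib_left power_int_add prod.distrib ac_simps)
qed

lemma sum_suppS_coeffS:
  "(\<Sum>S\<in>suppS \<alpha>. coeffS q \<alpha> S * g S) = (\<Sum>P\<in>Pow (pairs \<alpha>). (- q) ^ card P * g (sexp P))"
  unfolding suppS_def coeffS_def sum_distrib_right
  by (subst sum.image_gen[OF finite_Pow_iff[THEN iffD2, OF finite_pairs]]) (auto intro!: sum.cong)

text \<open>divdiff_pow x I k is the divided difference of t^k at the nodes x ` I.\<close>
definition divdiff_pow :: "(nat \<Rightarrow> 'a::field) \<Rightarrow> nat set \<Rightarrow> nat \<Rightarrow> 'a" where
  "divdiff_pow x I k = (\<Sum>a\<in>I. x a ^ k / (\<Prod>j\<in>I - {a}. x a - x j))"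

lemma divdiff_pow_Suc:
  assumes "finite I" "a \<in> I" "inj_on x I"
  shows "divdiff_pow x I (Suc k) = x a * divdiff_pow x I k + divdiff_pow x (I - {a}) k"
proof -
  have "divdiff_pow x I (Suc k) - x a * divdiff_pow x I k
      = (\<Sum>i\<in>I. x i ^ k * (x i - x a) / (\<Prod>j\<in>I - {i}. x i - x j))"
    unfolding divdiff_pow_def sum_distrib_left sum_subtractf[symmetric]
    by (rule sum.cong[OF refl]) (simp add: algebra_simps diff_divide_distrib)
  also have "\<dots> = (\<Sum>i\<in>I - {a}. x i ^ k * (x i - x a) / (\<Prod>j\<in>I - {i}. x i - x j))"
    using assms by (subst sum.remove[of I a]) auto
  also have "\<dots> = divdiff_pow x (I - {a}) k"
    unfolding divdiff_pow_def
  proof (rule sum.cong[OF refl])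
    fix i assume i: "i \<in> I - {a}"
    have "x i - x a \<noteq> 0" using assms i by (auto simp: inj_on_def)
    moreover have "(\<Prod>j\<in>I - {i}. x i - x j) = (x i - x a) * (\<Prod>j\<in>I - {a} - {i}. x i - x j)"
      using assms i by (subst prod.remove[of "I - {i}" a]) (auto intro: prod.cong)
    ultimately show "x i ^ k * (x i - x a) / (\<Prod>j\<in>I - {i}. x i - x j)
        = x i ^ k / (\<Prod>j\<in>I - {a} - {i}. x i - x j)"
      by simp
  qed
  finally show ?thesis by (simp add: algebra_simps)
qed

lemma divdiff_pow_card:
  assumes "finite I" "inj_on x I" "card I = Suc m"
  shows "(\<forall>k<m. divdiff_pow x I k = 0) \<and> divdiff_pow x I m = 1"
  using assms
proof (induction m arbitrary: I)
  case 0
  then obtain a where "I = {a}" by (auto simp: card_Suc_eq)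
  then show ?case by (simp add: divdiff_pow_def)
next
  case (Suc m)
  obtain a b where ab: "a \<in> I" "b \<in> I" "a \<noteq> b"
    using Suc.prems(3) by (auto simp: card_Suc_eq)
  have IH: "(\<forall>k<m. divdiff_pow x (I - {c}) k = 0) \<and> divdiff_pow x (I - {c}) m = 1"
    if "c \<in> I" for c
    using Suc.prems that by (intro Suc.IH) (auto intro: inj_on_subset)
  have vanish: "divdiff_pow x I k = 0" if "k \<le> m" for k
  proof -
    have "divdiff_pow x (I - {a}) k = divdiff_pow x (I - {b}) k"
      using IH[OF ab(1)] IH[OF ab(2)] that by (cases "k = m") auto
    moreover have "x a * divdiff_pow x I k + divdiff_pow x (I - {a}) k
        = x b * divdiff_pow x I k + divdiff_pow x (I - {b}) k"
      using divdiff_pow_Suc[of I a x k] divdiff_pow_Suc[of I b x k] Suc.prems ab by simp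
    ultimately have "(x a - x b) * divdiff_pow x I k = 0"
      by (simp add: algebra_simps)
    moreover have "x a \<noteq> x b" using ab Suc.prems by (auto simp: inj_on_def)
    ultimately show ?thesis by simp
  qed
  have "divdiff_pow x I (Suc m) = 1"
    using divdiff_pow_Suc[of I a x m] Suc.prems ab vanish[of m] IH[OF ab(1)] by simp
  then show ?case using vanish by (auto simp: less_Suc_eq_le)
qed

lemma sum_prod_Lagrange_eq_1:
  fixes x :: "nat \<Rightarrow> 'a::field"
  assumes "finite I" "I \<noteq> {}" "inj_on x I"
  shows "(\<Sum>a\<in>I. \<Prod>j\<in>I - {a}. x a / (x a - x j)) = 1"
proof -
  obtain m where m: "card I = Suc m" using assms by (cases "card I") auto
  have "(\<Sum>a\<in>I. \<Prod>j\<in>I - {a}. x a / (x a - x j)) = divdiff_pow x I m"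
    unfolding divdiff_pow_def using assms m by (intro sum.cong refl) (simp add: prod_dividef)
  then show ?thesis using divdiff_pow_card[OF assms(1,3) m] by simp
qed

lemma prod_set_distinct_eq_prod_nth:
  "distinct xs \<Longrightarrow> (\<Prod>j\<in>set xs. h j) = (\<Prod>l<length xs. h (xs ! l))"
  by (simp add: prod.distinct_set_conv_list prod.list_conv_set_nth atLeast0LessThan)

definition ordering_weight :: "(nat \<Rightarrow> 'a::field) \<Rightarrow> nat list \<Rightarrow> 'a" where
  "ordering_weight x xs = (\<Prod>(k, l)\<in>pairs (length xs). x (xs ! k) / (x (xs ! k) - x (xs ! l)))"

lemma pairs_Suc: "pairs (Suc m) = (\<lambda>l. (0, Suc l)) ` {..<m} \<union> map_prod Suc Suc ` pairs m"
proof (rule set_eqI)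
  fix p :: "nat \<times> nat"
  obtain i j where p: "p = (i, j)" by fastforce
  show "p \<in> pairs (Suc m) \<longleftrightarrow> p \<in> (\<lambda>l. (0, Suc l)) ` {..<m} \<union> map_prod Suc Suc ` pairs m"
    unfolding p pairs_def by (cases i; cases j) (auto simp: image_iff)
qed

lemma ordering_weight_Cons:
  assumes "distinct (a # r)"
  shows "ordering_weight x (a # r) = (\<Prod>j\<in>set r. x a / (x a - x j)) * ordering_weight x r"
proof -
  let ?h = "\<lambda>(k, l). x ((a # r) ! k) / (x ((a # r) ! k) - x ((a # r) ! l))"
  have "ordering_weight x (a # r)
      = prod ?h ((\<lambda>l. (0, Suc l)) ` {..<length r}) * prod ?h (map_prod Suc Suc ` pairs (length r))"
    unfolding ordering_weight_def length_Cons pairs_Suc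
    by (rule prod.union_disjoint) (auto simp: finite_pairs)
  also have "prod ?h ((\<lambda>l. (0, Suc l)) ` {..<length r}) = (\<Prod>j\<in>set r. x a / (x a - x j))"
    using assms by (subst prod.reindex) (auto simp: inj_on_def prod_set_distinct_eq_prod_nth)
  also have "prod ?h (map_prod Suc Suc ` pairs (length r)) = ordering_weight x r"
    unfolding ordering_weight_def by (subst prod.reindex) (auto simp: inj_on_def intro!: prod.cong)
  finally show ?thesis .
qed

lemma sum_ordering_weight_eq_1:
  fixes x :: "nat \<Rightarrow> 'a::field"
  assumes "finite I" "inj_on x I"
  shows "(\<Sum>xs\<in>permutations_of_set I. ordering_weight x xs) = 1"
  using assms
proof (induction "card I" arbitrary: I)
  case 0
  then show ?case by (simp add: ordering_weight_def pairs_def)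
next
  case (Suc m)
  then have "I \<noteq> {}" by auto
  have "(\<Sum>xs\<in>permutations_of_set I. ordering_weight x xs)
      = (\<Sum>a\<in>I. \<Sum>r\<in>permutations_of_set (I - {a}). ordering_weight x (a # r))"
    unfolding permutations_of_set_nonempty[OF \<open>I \<noteq> {}\<close>] using Suc.prems
    by (subst sum.UNION_disjoint) (auto simp: sum.reindex)
  also have "\<dots> = (\<Sum>a\<in>I. (\<Prod>j\<in>I - {a}. x a / (x a - x j))
                    * (\<Sum>r\<in>permutations_of_set (I - {a}). ordering_weight x r))"
    by (intro sum.cong refl)
       (auto simp: sum_distrib_left ordering_weight_Cons permutations_of_set_def intro!: sum.cong)
  also have "\<dots> = (\<Sum>a\<in>I. \<Prod>j\<in>I - {a}. x a / (x a - x j))"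
    using Suc by (intro sum.cong refl) (simp add: inj_on_subset[OF Suc.prems(2)])
  also have "\<dots> = 1"
    using sum_prod_Lagrange_eq_1 Suc.prems \<open>I \<noteq> {}\<close> by blast
  finally show ?case .
qed

lemma generic_ptD:
  assumes "generic_pt q N x"
  shows "q \<noteq> 0"
    and "i < N \<Longrightarrow> x i \<noteq> 0"
    and "i < N \<Longrightarrow> j < N \<Longrightarrow> i \<noteq> j \<Longrightarrow> x i \<noteq> x j"
    and "i < N \<Longrightarrow> j < N \<Longrightarrow> i \<noteq> j \<Longrightarrow> x i \<noteq> q * x j"
proof -
  show "q \<noteq> 0" "i < N \<Longrightarrow> x i \<noteq> 0" using assms by (auto simp: generic_pt_def)
  assume ij: "i < N" "j < N" "i \<noteq> j"
  then have "\<forall>a\<le>N. \<forall>b\<le>N. q ^ a * x i \<noteq> q ^ b * x j"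
    using assms by (auto simp: generic_pt_def)
  moreover have "(1::nat) \<le> N" using ij by simp
  ultimately have "q ^ 0 * x i \<noteq> q ^ 0 * x j" "q ^ 0 * x i \<noteq> q ^ 1 * x j"
    using le0 by blast+
  then show "x i \<noteq> x j" "x i \<noteq> q * x j" by simp_all
qed

lemma count_list_distinct: "distinct xs \<Longrightarrow> count_list xs c = (if c \<in> set xs then 1 else 0)"
  by (induction xs) auto

lemma nth_in_take_distinct: "distinct xs \<Longrightarrow> l < length xs \<Longrightarrow> xs ! l \<in> set (take k xs) \<longleftrightarrow> l < k"
  by (auto simp: in_set_conv_nth nth_eq_iff_index_eq)

lemma qshift_distinct:
  "distinct xs \<Longrightarrow> qshift q y xs j = (if j \<in> set xs then q * y j else y j)"
  by (simp add: qshift_def count_list_distinct)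

lemma Gamma_eq_qshift: "distinct xs \<Longrightarrow> Gamma q (set xs) f x = f (qshift q x xs)"
  unfolding Gamma_def by (rule arg_cong[where f = f]) (auto simp: qshift_distinct)

lemma seq_val_eq: "seq_val q y xs k = q ^ count_list (take k xs) (xs ! k) * y (xs ! k)"
  by (simp add: seq_val_def qshift_def)

lemma seq_val_distinct: "distinct xs \<Longrightarrow> k < length xs \<Longrightarrow> seq_val q y xs k = y (xs ! k)"
  by (simp add: seq_val_eq nth_in_take_distinct)

lemma nondistinct_first_repeat:
  assumes "\<not> distinct xs"
  shows "\<exists>k l. k < l \<and> l < length xs \<and> xs ! k = xs ! l \<and>
    count_list (take l xs) (xs ! l) = Suc (count_list (take k xs) (xs ! k))"
  using assms
proof (induction xs rule: rev_induct)
  case Nil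
  then show ?case by simp
next
  case (snoc a xs)
  show ?case
  proof (cases "distinct xs")
    case True
    with snoc.prems obtain k where k: "k < length xs" "a = xs ! k"
      by (auto simp: in_set_conv_nth)
    then show ?thesis
      using True by (intro exI[of _ k] exI[of _ "length xs"])
        (simp add: nth_append count_list_distinct nth_in_take_distinct)
  next
    case False
    then obtain k l where "k < l" "l < length xs" "xs ! k = xs ! l"
      "count_list (take l xs) (xs ! l) = Suc (count_list (take k xs) (xs ! k))"
      using snoc.IH by blast
    then show ?thesis
      by (intro exI[of _ k] exI[of _ l]) (simp add: nth_append)
  qed
qed

definition seq_weight :: "'a::field \<Rightarrow> nat \<Rightarrow> int \<Rightarrow> (nat \<Rightarrow> 'a) \<Rightarrow> nat list \<Rightarrow> 'a" where
  "seq_weight q N n x xs = (\<Prod>k<length xs. seq_val q x xs k powi n)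
     * (\<Prod>(k, l)\<in>pairs (length xs). 1 - q * seq_val q x xs k / seq_val q x xs l)
     * seq_coeff q N x xs"

lemma seq_weight_nondistinct:
  assumes "generic_pt q N x" "set xs \<subseteq> {..<N}" "\<not> distinct xs"
  shows "seq_weight q N n x xs = 0"
proof -
  obtain k l where kl: "k < l" "l < length xs" "xs ! k = xs ! l"
    "count_list (take l xs) (xs ! l) = Suc (count_list (take k xs) (xs ! k))"
    using nondistinct_first_repeat[OF assms(3)] by blast
  have "xs ! l < N" using nth_mem[OF kl(2)] assms(2) by auto
  then have "1 - q * seq_val q x xs k / seq_val q x xs l = 0"
    using kl generic_ptD[OF assms(1)] by (simp add: seq_val_eq)
  moreover have "(k, l) \<in> pairs (length xs)" using kl by (simp add: pairs_def)
  ultimately have "(\<Prod>(k, l)\<in>pairs (length xs). 1 - q * seq_val q x xs k / seq_val q x xs l) = 0"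
    by (intro prod_zero finite_pairs bexI[of _ "(k, l)"]) simp_all
  then show ?thesis
    unfolding seq_weight_def by simp
qed

lemma power_int_prod: "finite A \<Longrightarrow> (\<Prod>i\<in>A. f i) powi n = (\<Prod>i\<in>A. (f i :: 'a::field) powi n)"
  by (induction A rule: finite_induct) (auto simp: power_int_mult_distrib)

lemma seq_coeff_eq_prod: "seq_coeff q N y xs = (\<Prod>k<length xs. step_coeff N (qshift q y (take k xs)) (xs ! k))"
proof (induction xs arbitrary: y)
  case Nil
  then show ?case by simp
next
  case (Cons i xs)
  show ?case
    by (simp only: length_Cons prod.lessThan_Suc_shift)
       (simp add: Cons.IH qshift_append[symmetric])
qed

lemma step_coeff_qshift_take:
  assumes "distinct xs" "set xs \<subseteq> {..<N}" "k < length xs"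
  shows "step_coeff N (qshift q x (take k xs)) (xs ! k) =
     (\<Prod>j\<in>{..<N} - set xs. x (xs ! k) / (x (xs ! k) - x j)) *
     (\<Prod>l\<in>{..<length xs} - {k}. x (xs ! k) / (x (xs ! k) - (if l < k then q * x (xs ! l) else x (xs ! l))))"
    (is "_ = ?rhs")
proof -
  let ?a = "xs ! k"
  let ?y = "qshift q x (take k xs)"
  have y_val: "?y (xs ! l) = (if l < k then q * x (xs ! l) else x (xs ! l))" if "l < length xs" for l
    using assms that by (simp add: qshift_distinct nth_in_take_distinct)
  have y_outside: "?y j = x j" if "j \<notin> set xs" for j
    using assms that set_take_subset[of k xs] by (auto simp: qshift_distinct)
  have "xs ! l < N" if "l < length xs" for l
    using assms(2) nth_mem[OF that] by auto
  then have split: "{..<N} - {?a} = ({..<N} - set xs) \<union> nth xs ` ({..<length xs} - {k})"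
    using assms by (auto simp: in_set_conv_nth nth_eq_iff_index_eq)
  have inj: "inj_on (nth xs) ({..<length xs} - {k})"
    using assms by (intro inj_on_nth) auto
  have "step_coeff N ?y ?a = (\<Prod>j\<in>{..<N} - set xs. ?y ?a / (?y ?a - ?y j))
      * (\<Prod>j\<in>nth xs ` ({..<length xs} - {k}). ?y ?a / (?y ?a - ?y j))"
    unfolding step_coeff_def split
    by (rule prod.union_disjoint) (auto simp: in_set_conv_nth)
  also have "\<dots> = (\<Prod>j\<in>{..<N} - set xs. ?y ?a / (?y ?a - ?y j))
      * (\<Prod>l\<in>{..<length xs} - {k}. ?y ?a / (?y ?a - ?y (xs ! l)))"
    by (simp add: prod.reindex[OF inj])
  also have "\<dots> = ?rhs"
    using y_val[OF assms(3)] assms(3)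
    by (intro arg_cong2[where f = "(*)"] prod.cong refl) (auto simp: y_val y_outside)
  finally show ?thesis .
qed

lemma offdiag_eq_pairs_Un_flip:
  "(SIGMA k:{..<m}. {..<m} - {k}) = pairs m \<union> prod.swap ` pairs m"
  by (auto simp: pairs_def image_iff)

text \<open>For k < l the factor 1 - q w_k / w_l cancels against w_l / (w_l - q w_k).\<close>
lemma pairs_factor_cancel:
  fixes w :: "nat \<Rightarrow> 'a::field"
  assumes nonzero: "\<And>k. k < m \<Longrightarrow> w k \<noteq> 0"
    and inj: "\<And>k l. k < m \<Longrightarrow> l < m \<Longrightarrow> k \<noteq> l \<Longrightarrow> w k \<noteq> w l"
    and not_shift: "\<And>k l. k < m \<Longrightarrow> l < m \<Longrightarrow> k \<noteq> l \<Longrightarrow> w l \<noteq> q * w k"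
  shows "(\<Prod>(k, l)\<in>pairs m. 1 - q * w k / w l) *
       (\<Prod>k<m. \<Prod>l\<in>{..<m} - {k}. w k / (w k - (if l < k then q * w l else w l)))
     = (\<Prod>(k, l)\<in>pairs m. w k / (w k - w l))"
proof -
  let ?g = "\<lambda>k l. w k / (w k - (if l < k then q * w l else w l))"
  let ?h = "case_prod ?g"
  have "(\<Prod>k<m. \<Prod>l\<in>{..<m} - {k}. ?g k l) = prod ?h (SIGMA k:{..<m}. {..<m} - {k})"
    by (rule prod.Sigma) auto
  also have "\<dots> = prod ?h (pairs m) * prod ?h (prod.swap ` pairs m)"
    unfolding offdiag_eq_pairs_Un_flip
    by (rule prod.union_disjoint) (auto simp: finite_pairs, auto simp: pairs_def)
  also have "prod ?h (pairs m) = (\<Prod>(k, l)\<in>pairs m. w k / (w k - w l))"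
    by (rule prod.cong) (auto simp: pairs_def)
  also have "prod ?h (prod.swap ` pairs m) = (\<Prod>(k, l)\<in>pairs m. w l / (w l - q * w k))"
    by (subst prod.reindex) (auto simp: pairs_def intro!: prod.cong)
  finally have offdiag: "(\<Prod>k<m. \<Prod>l\<in>{..<m} - {k}. ?g k l)
      = (\<Prod>(k, l)\<in>pairs m. w k / (w k - w l)) * (\<Prod>(k, l)\<in>pairs m. w l / (w l - q * w k))" .
  have "(1 - q * w k / w l) * (w l / (w l - q * w k)) = 1" if "(k, l) \<in> pairs m" for k l
    using that nonzero[of l] not_shift[of k l] by (auto simp: pairs_def field_simps)
  then have "(\<Prod>(k, l)\<in>pairs m. 1 - q * w k / w l) * (\<Prod>(k, l)\<in>pairs m. w l / (w l - q * w k)) = 1"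
    unfolding prod.distrib[symmetric] by (intro prod.neutral) auto
  then show ?thesis
    unfolding offdiag by (simp add: ac_simps)
qed

lemma seq_weight_distinct:
  assumes "generic_pt q N x" "set xs \<subseteq> {..<N}" "distinct xs"
  shows "seq_weight q N n x xs
       = x_I (set xs) x powi n * (\<Prod>i\<in>set xs. \<Prod>j\<in>{..<N} - set xs. x i / (x i - x j))
         * ordering_weight x xs"
proof -
  let ?m = "length xs"
  define w where "w k = x (xs ! k)" for k
  have val: "seq_val q x xs k = w k" if "k < ?m" for k
    using assms(3) that by (simp add: seq_val_distinct w_def)
  have below: "xs ! k < N" if "k < ?m" for k
    using assms(2) nth_mem[OF that] by auto
  have "(\<Prod>k<?m. seq_val q x xs k powi n) = x_I (set xs) x powi n"
    unfolding x_I_def using assms(3) by (simp add: power_int_prod prod_set_distinct_eq_prod_nth val w_def)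
  moreover have "(\<Prod>(k, l)\<in>pairs ?m. 1 - q * seq_val q x xs k / seq_val q x xs l)
      = (\<Prod>(k, l)\<in>pairs ?m. 1 - q * w k / w l)"
    by (rule prod.cong) (auto simp: pairs_def val)
  moreover have "seq_coeff q N x xs = (\<Prod>i\<in>set xs. \<Prod>j\<in>{..<N} - set xs. x i / (x i - x j))
      * (\<Prod>k<?m. \<Prod>l\<in>{..<?m} - {k}. w k / (w k - (if l < k then q * w l else w l)))"
    unfolding seq_coeff_eq_prod w_def
    using assms(2,3) by (simp add: step_coeff_qshift_take prod_set_distinct_eq_prod_nth prod.distrib)
  moreover have "(\<Prod>(k, l)\<in>pairs ?m. 1 - q * w k / w l)
      * (\<Prod>k<?m. \<Prod>l\<in>{..<?m} - {k}. w k / (w k - (if l < k then q * w l else w l)))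
      = ordering_weight x xs"
    unfolding ordering_weight_def w_def[symmetric]
    using generic_ptD[OF assms(1)] below assms(3)
    by (intro pairs_factor_cancel) (auto simp: w_def nth_eq_iff_index_eq)
  ultimately show ?thesis
    unfolding seq_weight_def by (simp add: ac_simps)
qed

lemma sum_coeffS_Mprod_eq_sum_seq_weight:
  assumes "generic_pt q N x"
  shows "(\<Sum>S\<in>suppS \<alpha>. coeffS q \<alpha> S * Mprod q N \<alpha> n S f x)
       = (\<Sum>xs\<in>index_seqs N \<alpha>. seq_weight q N n x xs * f (qshift q x xs))"
proof -
  have nonzero: "seq_val q x xs k \<noteq> 0" if "xs \<in> index_seqs N \<alpha>" "k < \<alpha>" for xs k
  proof -
    have "xs ! k \<in> set xs" "set xs \<subseteq> {..<N}" using that by (simp_all add: index_seqs_def)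
    then have "xs ! k < N" by auto
    then show ?thesis using generic_ptD[OF assms] by (simp add: seq_val_eq)
  qed
  have "(\<Sum>S\<in>suppS \<alpha>. coeffS q \<alpha> S * Mprod q N \<alpha> n S f x)
      = (\<Sum>P\<in>Pow (pairs \<alpha>). (- q) ^ card P * Mprod q N \<alpha> n (sexp P) f x)"
    by (rule sum_suppS_coeffS)
  also have "\<dots> = (\<Sum>xs\<in>index_seqs N \<alpha>.
      (\<Sum>P\<in>Pow (pairs \<alpha>). (- q) ^ card P * (\<Prod>k<\<alpha>. seq_val q x xs k powi (n + sexp P k)))
      * seq_coeff q N x xs * f (qshift q x xs))"
    unfolding Mprod_expand sum_distrib_left sum_distrib_right
    by (subst sum.swap) (simp add: ac_simps)
  also have "\<dots> = (\<Sum>xs\<in>index_seqs N \<alpha>. seq_weight q N n x xs * f (qshift q x xs))"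
    using nonzero by (intro sum.cong refl) (simp add: pairs_product_expansion seq_weight_def index_seqs_def)
  finally show ?thesis .
qed

lemma sum_distinct_index_seqs:
  assumes "inj_on x {..<N}"
  shows "(\<Sum>xs\<in>{xs\<in>index_seqs N \<alpha>. distinct xs}. h (set xs) * ordering_weight x xs)
       = (\<Sum>I | I \<subseteq> {..<N} \<and> card I = \<alpha>. h I)"
proof -
  have seqs: "{xs\<in>index_seqs N \<alpha>. distinct xs}
      = (\<Union>I\<in>{I. I \<subseteq> {..<N} \<and> card I = \<alpha>}. permutations_of_set I)"
    by (auto simp: index_seqs_def permutations_of_set_def distinct_card)
  have "(\<Sum>xs\<in>{xs\<in>index_seqs N \<alpha>. distinct xs}. h (set xs) * ordering_weight x xs)
      = (\<Sum>I | I \<subseteq> {..<N} \<and> card I = \<alpha>. \<Sum>xs\<in>permutations_of_set I. h I * ordering_weight x xs)"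
    unfolding seqs by (subst sum.UNION_disjoint)
       (auto simp: finite_subset dest: permutations_of_setD intro!: sum.cong)
  also have "\<dots> = (\<Sum>I | I \<subseteq> {..<N} \<and> card I = \<alpha>. h I)"
  proof (intro sum.cong refl)
    fix I assume "I \<in> {I. I \<subseteq> {..<N} \<and> card I = \<alpha>}"
    then have "(\<Sum>xs\<in>permutations_of_set I. ordering_weight x xs) = 1"
      using assms by (intro sum_ordering_weight_eq_1) (auto intro: finite_subset inj_on_subset)
    then show "(\<Sum>xs\<in>permutations_of_set I. h I * ordering_weight x xs) = h I"
      by (simp add: sum_distrib_left[symmetric])
  qed
  finally show ?thesis .
qed

theorem theorem4p5:
  fixes q :: "'a::field" and N \<alpha> :: nat and n :: int
    and f :: "(nat \<Rightarrow> 'a) \<Rightarrow> 'a" and x :: "nat \<Rightarrow> 'a"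
  assumes "1 \<le> \<alpha>" and "\<alpha> \<le> N"
    and "symmetric_fun N f"
    and "generic_pt q N x"
  shows "Mop q N \<alpha> n f x = (\<Sum>S\<in>suppS \<alpha>. coeffS q \<alpha> S * Mprod q N \<alpha> n S f x)"
proof -
  let ?F = "\<lambda>I. x_I I x powi n * (\<Prod>i\<in>I. \<Prod>j\<in>{..<N} - I. x i / (x i - x j)) * Gamma q I f x"
  have "(\<Sum>S\<in>suppS \<alpha>. coeffS q \<alpha> S * Mprod q N \<alpha> n S f x)
      = (\<Sum>xs\<in>index_seqs N \<alpha>. seq_weight q N n x xs * f (qshift q x xs))"
    using assms(4) by (rule sum_coeffS_Mprod_eq_sum_seq_weight)
  also have "\<dots> = (\<Sum>xs\<in>{xs\<in>index_seqs N \<alpha>. distinct xs}. ?F (set xs) * ordering_weight x xs)"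
    using seq_weight_nondistinct[OF assms(4)] seq_weight_distinct[OF assms(4)]
    by (intro sum.mono_neutral_cong_right finite_index_seqs)
       (auto simp: index_seqs_def Gamma_eq_qshift ac_simps)
  also have "\<dots> = (\<Sum>I | I \<subseteq> {..<N} \<and> card I = \<alpha>. ?F I)"
    using generic_ptD(3)[OF assms(4)] by (intro sum_distinct_index_seqs) (auto simp: inj_on_def)
  finally show ?thesis
    by (simp add: Mop_def)
qed

end
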